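(* Let $X=(X_i)_{1\le i\le n}$ and $Y=(Y_i)_{1\le i\le n}$ be independent, each with i.i.d. letters in a finite alphabet $\{\alpha_1,\dots,\alpha_m\}$ with $\mathbb{P}(X_1=\alpha_k)=\mathbb{P}(Y_1=\alpha_k)=p_k$, and let $LC_n$ be the length of the longest common subsequence of $X_1\cdots X_n$ and $Y_1\cdots Y_n$. Then for every $r\ge2$, \[ \mathbb{E}|LC_n-\mathbb{E}LC_n|^r\le\frac{(r-1)^r}{2}\left(1-\sum_{k=1}^mp_k^2\right)(2n)^{r/2}, \] and for every $0<r\le2$, \[ \mathbb{E}|LC_n-\mathbb{E}LC_n|^r\le\left(\left(1-\sum_{k=1}^mp_k^2\right)n\right)^{r/2}. \]
   Context: $LC_n$ is the largest $k$ such that there exist $1\le i_1<\dots<i_k\le n$ and $1\le j_1<\dots<j_k\le n$ with $X_{i_s}=Y_{j_s}$ for $s=1,\dots,k$. *)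

theory Defs
  imports "HOL-Probability.Probability"
begin

text \<open>Words of length n are functions on the index set {1..n}.\<close>

definition LC :: "nat \<Rightarrow> (nat \<Rightarrow> 'a) \<Rightarrow> (nat \<Rightarrow> 'a) \<Rightarrow> nat" where
  "LC n x y = Max {k. \<exists>i j :: nat \<Rightarrow> nat.
      (\<forall>s\<in>{1..k}. 1 \<le> i s \<and> i s \<le> n \<and> 1 \<le> j s \<and> j s \<le> n \<and> x (i s) = y (j s)) \<and>
      (\<forall>s\<in>{1..<k}. i s < i (Suc s) \<and> j s < j (Suc s))}"

definition word_pair_pmf :: "nat \<Rightarrow> 'a pmf \<Rightarrow> ((nat \<Rightarrow> 'a) \<times> (nat \<Rightarrow> 'a)) pmf" where
  "word_pair_pmf n p = pair_pmf (Pi_pmf {1..n} undefined (\<lambda>_. p)) (Pi_pmf {1..n} undefined (\<lambda>_. p))"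

end

theory Submission
  imports Defs
begin

text \<open>View the two words as one family of \<open>2n\<close> independent letters. Changing a single letter
  changes \<open>LC\<^sub>n\<close> by at most one, so it suffices to bound the central moments of any function
  \<open>f\<close> of independent letters with differences bounded by one. Integrating out one letter at a
  time, a second-order Taylor expansion of \<open>\<bar>\<cdot>\<bar> powr r\<close> together with Minkowski's inequality
  shows that the \<open>r\<close>-th central moment \<open>m\<close> grows by at most
  \<open>r (r - 1) / 2 \<cdot> v \<cdot> (m powr (1 / r) + 1) powr (r - 2)\<close> per letter, where \<open>v\<close> bounds the
  variance in the integrated letter. A function of one letter with oscillation at most one
  has variance at most half the probability \<open>1 - \<Sum>\<^sub>k p\<^sub>k\<^sup>2\<close> that two independent
  letters differ. Induction on the number of letters gives the bound for \<open>r \<ge> 2\<close>, and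
  Lyapunov's inequality reduces \<open>0 < r \<le> 2\<close> to the case \<open>r = 2\<close>.\<close>

section \<open>Real inequalities\<close>

lemma powr_tangent_le:
  fixes c u p :: real
  assumes c: "c > 0" and u: "u \<ge> 0" and p: "p \<ge> 1"
  shows "c powr p + p * c powr (p - 1) * (u - c) \<le> u powr p"
proof (cases "u = 0")
  case True
  have "c powr p + p * c powr (p - 1) * (u - c) = (1 - p) * c powr p"
    using True c by (simp add: powr_diff algebra_simps)
  also have "\<dots> \<le> 0" using p by (simp add: mult_nonpos_nonneg)
  finally show ?thesis using True by simp
next
  case False
  have "p * c powr (p - 1) * (u - c) \<le> u powr p - c powr p"
  proof (rule f''_imp_f'[where C="{0<..}" and f="\<lambda>x. x powr p" and f'="\<lambda>x. p * x powr (p - 1)"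
          and f''="\<lambda>x. p * ((p - 1) * x powr (p - 1 - 1))"])
    fix x :: real assume "x \<in> {0<..}"
    then have x: "x > 0" by simp
    show "((\<lambda>x. x powr p) has_real_derivative p * x powr (p - 1)) (at x)"
      using has_real_derivative_powr[OF x] .
    show "((\<lambda>x. p * x powr (p - 1)) has_real_derivative p * ((p - 1) * x powr (p - 1 - 1))) (at x)"
      by (intro DERIV_cmult has_real_derivative_powr x)
    show "0 \<le> p * ((p - 1) * x powr (p - 1 - 1))" using p by simp
  qed (use c u False in auto)
  then show ?thesis by simp
qed

lemma powr_minus_two_le_pred_powr_pred:
  fixes r :: real assumes r: "r \<ge> 2"
  shows "r powr (r - 2) \<le> (r - 1) powr (r - 1)"
proof -
  define t where "t = r - 1"
  have t: "t \<ge> 1" using r t_def by simp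
  have ln_succ: "ln (t + 1) \<le> ln t + 1 / t"
  proof -
    have "1 + 1 / t = (t + 1) / t" using t by (simp add: field_simps)
    then have "ln (1 + 1 / t) = ln (t + 1) - ln t" using t by (simp add: ln_div)
    then have "ln (t + 1) = ln t + ln (1 + 1 / t)" by simp
    also have "ln (1 + 1 / t) \<le> 1 / t" using t by (intro ln_add_one_self_le_self) simp
    finally show ?thesis by simp
  qed
  have ln_lower: "1 - 1 / t \<le> ln t"
    using ln_le_minus_one[of "1 / t"] t by (simp add: ln_div)
  have "(t - 1) * ln (t + 1) \<le> (t - 1) * (ln t + 1 / t)"
    using ln_succ t by (intro mult_left_mono) auto
  also have "\<dots> = (t - 1) * ln t + (1 - 1 / t)" using t by (simp add: field_simps)
  also have "\<dots> \<le> t * ln t" using ln_lower by (simp add: algebra_simps)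
  finally have "(r - 2) * ln r \<le> (r - 1) * ln (r - 1)" unfolding t_def by simp
  then show ?thesis using r by (simp add: powr_def)
qed

lemma has_real_derivative_abs_powr:
  fixes r t :: real assumes r: "r > 1"
  shows "((\<lambda>x. \<bar>x\<bar> powr r) has_real_derivative r * (t * \<bar>t\<bar> powr (r - 2))) (at t)"
proof -
  consider "t > 0" | "t < 0" | "t = 0" by linarith
  then show ?thesis
  proof cases
    case 1
    have ev: "eventually (\<lambda>x. \<bar>x\<bar> powr r = x powr r) (nhds t)"
      using eventually_nhds_in_open[of "{0<..}" t] 1 by (auto elim!: eventually_mono)
    have "t powr (r - 1) = t * \<bar>t\<bar> powr (r - 2)"
      using 1 by (simp add: powr_diff field_simps power2_eq_square)
    then show ?thesis
      using has_real_derivative_powr[OF 1, of r] by (subst DERIV_cong_ev[OF refl ev refl]) simp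
  next
    case 2
    have ev: "eventually (\<lambda>x. \<bar>x\<bar> powr r = (- x) powr r) (nhds t)"
      using eventually_nhds_in_open[of "{..<0}" t] 2 by (auto elim!: eventually_mono)
    have "((\<lambda>x. (- x) powr r) has_real_derivative r * (- t) powr (r - 1) * (- 1)) (at t)"
      using 2 by (intro DERIV_chain2[OF has_real_derivative_powr]) (auto intro!: derivative_eq_intros)
    moreover have "r * (- t) powr (r - 1) * (- 1) = r * (t * \<bar>t\<bar> powr (r - 2))"
      using 2 by (simp add: powr_diff field_simps power2_eq_square)
    ultimately show ?thesis by (subst DERIV_cong_ev[OF refl ev refl]) simp
  next
    case 3
    have "((\<lambda>h. (\<bar>0 + h\<bar> powr r - \<bar>0\<bar> powr r) / h) \<longlongrightarrow> 0) (at 0)"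
    proof (rule Lim_null_comparison)
      show "\<forall>\<^sub>F h in at 0. norm ((\<bar>0 + h\<bar> powr r - \<bar>0\<bar> powr r) / h) \<le> \<bar>h\<bar> powr (r - 1)"
        by (intro always_eventually allI) (simp add: powr_diff abs_divide)
      show "((\<lambda>h. \<bar>h\<bar> powr (r - 1)) \<longlongrightarrow> 0) (at 0)"
        using r by (intro tendsto_zero_powrI tendsto_rabs_zero tendsto_ident_at tendsto_const) auto
    qed
    then show ?thesis using 3 by (simp add: DERIV_def)
  qed
qed

lemma powr_pred_diff_le:
  fixes r s t R :: real
  assumes r: "r \<ge> 2" and st: "0 \<le> s" "s \<le> t" "t \<le> R"
  shows "t powr (r - 1) - s powr (r - 1) \<le> (r - 1) * R powr (r - 2) * (t - s)"
proof (cases "s = t")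
  case False
  then have "s < t" using st by simp
  have "continuous_on {s..t} (\<lambda>x. x powr (r - 1))"
    using st r by (intro continuous_on_powr' continuous_intros) auto
  moreover have "(\<lambda>x. x powr (r - 1)) differentiable (at z)" if "s < z" for z
    unfolding real_differentiable_def using has_real_derivative_powr[of z "r - 1"] that st by force
  ultimately obtain l z where z: "s < z" "z < t"
      and l: "((\<lambda>x. x powr (r - 1)) has_real_derivative l) (at z)"
      and mvt: "t powr (r - 1) - s powr (r - 1) = (t - s) * l"
    using MVT[OF \<open>s < t\<close>] by blast
  have "l = (r - 1) * z powr (r - 2)"
    using DERIV_unique[OF l has_real_derivative_powr[of z "r - 1"]] z st by simp
  moreover have "z powr (r - 2) \<le> R powr (r - 2)"
    using z st r by (intro powr_mono2) auto
  ultimately have "l \<le> (r - 1) * R powr (r - 2)"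
    using r by (simp add: mult_left_mono)
  then show ?thesis
    using mvt z by (simp add: mult_left_mono)
qed simp

text \<open>The derivative of \<open>\<bar>x\<bar> powr r / r\<close>.\<close>

definition signed_powr :: "real \<Rightarrow> real \<Rightarrow> real" where
  "signed_powr r x = x * \<bar>x\<bar> powr (r - 2)"

lemma signed_powr_nonneg: "r \<ge> 2 \<Longrightarrow> x \<ge> 0 \<Longrightarrow> signed_powr r x = x powr (r - 1)"
  by (cases "x = 0") (auto simp: signed_powr_def powr_diff field_simps power2_eq_square)

lemma signed_powr_nonpos: "r \<ge> 2 \<Longrightarrow> x \<le> 0 \<Longrightarrow> signed_powr r x = - ((- x) powr (r - 1))"
  by (cases "x = 0") (auto simp: signed_powr_def powr_diff field_simps power2_eq_square)

lemma signed_powr_diff_le: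
  fixes r s t R :: real
  assumes r: "r \<ge> 2" and st: "s \<le> t" "\<bar>s\<bar> \<le> R" "\<bar>t\<bar> \<le> R"
  shows "signed_powr r t - signed_powr r s \<le> (r - 1) * R powr (r - 2) * (t - s)"
proof -
  consider "0 \<le> s" | "t \<le> 0" | "s < 0 \<and> 0 < t" by linarith
  then show ?thesis
  proof cases
    case 1
    then show ?thesis
      using powr_pred_diff_le[OF r 1 st(1)] st r by (simp add: signed_powr_nonneg)
  next
    case 2
    then show ?thesis
      using powr_pred_diff_le[OF r, of "- t" "- s" R] st r by (simp add: signed_powr_nonpos algebra_simps)
  next
    case 3
    then show ?thesis
      using powr_pred_diff_le[OF r, of 0 t R] powr_pred_diff_le[OF r, of 0 "- s" R] st r
      by (simp add: signed_powr_nonneg signed_powr_nonpos algebra_simps)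
  qed
qed

text \<open>The derivative \<open>r * signed_powr r\<close> is Lipschitz on \<open>[a - 1, a + 1]\<close>, so the remainder
  after the linear term is at most quadratic.\<close>

lemma abs_powr_add_le:
  fixes r a x :: real
  assumes r: "r \<ge> 2" and x: "\<bar>x\<bar> \<le> 1"
  shows "\<bar>a + x\<bar> powr r \<le> \<bar>a\<bar> powr r + r * signed_powr r a * x
           + r * (r - 1) / 2 * (\<bar>a\<bar> + 1) powr (r - 2) * x\<^sup>2"
proof -
  define L where "L = r * (r - 1) * (\<bar>a\<bar> + 1) powr (r - 2)"
  define A where "A z = \<bar>a + z\<bar> powr r" for z
  define g where "g z = A z - \<bar>a\<bar> powr r - r * signed_powr r a * z - L / 2 * z\<^sup>2" for z
  define g' where "g' z = r * (signed_powr r (a + z) - signed_powr r a) - L * z" for z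
  have g': "(g has_real_derivative g' z) (at z)" for z
  proof -
    have "(A has_real_derivative r * signed_powr r (a + z)) (at z)"
      using DERIV_chain2[OF has_real_derivative_abs_powr[of r] DERIV_add[OF DERIV_const DERIV_ident], of a z] r
      by (simp add: A_def[abs_def] signed_powr_def)
    then show ?thesis
      unfolding g_def g'_def by (auto intro!: derivative_eq_intros simp: algebra_simps)
  qed
  have lipschitz: "r * (signed_powr r t - signed_powr r s) \<le> L * (t - s)"
    if "s \<le> t" "\<bar>s - a\<bar> \<le> 1" "\<bar>t - a\<bar> \<le> 1" for s t
    using mult_left_mono[OF signed_powr_diff_le[OF r, of s t "\<bar>a\<bar> + 1"], of r] that r
    by (simp add: L_def mult.assoc)
  have "g x \<le> g 0"
  proof (cases "x \<ge> 0")
    case True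
    show ?thesis
    proof (rule deriv_nonpos_imp_antimono[of 0 x g g'])
      fix z assume "z \<in> {0..x}"
      then show "g' z \<le> 0" using lipschitz[of a "a + z"] x by (simp add: g'_def)
    qed (use g' True in auto)
  next
    case False
    show ?thesis
    proof (rule DERIV_nonneg_imp_nondecreasing[of x 0 g])
      fix z assume "x \<le> z" "z \<le> 0"
      then have "g' z \<ge> 0" using lipschitz[of "a + z" a] x by (simp add: g'_def algebra_simps)
      then show "\<exists>y. (g has_real_derivative y) (at z) \<and> 0 \<le> y" using g' by blast
    qed (use False in auto)
  qed
  then show ?thesis by (simp add: g_def A_def L_def algebra_simps)
qed

lemma half_mult_pred_le_pred_powr:
  fixes r :: real assumes r: "r \<ge> 2"
  shows "r * (r - 1) / 2 \<le> (r - 1) powr r"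
proof -
  have "r * (r - 1) / 2 \<le> (r - 1) * (r - 1)"
    using mult_right_mono[of "r / 2" "r - 1" "r - 1"] r by simp
  also have "\<dots> = (r - 1) powr 2" using r by (simp add: powr_numeral power2_eq_square)
  also have "\<dots> \<le> (r - 1) powr r" using r by (intro powr_mono) auto
  finally show ?thesis .
qed

lemma root_moment_plus_one_powr_le:
  fixes r s m :: real and k :: nat
  assumes r: "r \<ge> 2" and s: "0 \<le> s" "s \<le> 1" and k: "k \<ge> 1"
    and m: "0 \<le> m" "m \<le> (r - 1) powr r * s * real k powr (r / 2)"
  shows "(m powr (1 / r) + 1) powr (r - 2) \<le> r powr (r - 2) * real k powr (r / 2 - 1)"
proof -
  have "m powr (1 / r) \<le> ((r - 1) powr r * s * real k powr (r / 2)) powr (1 / r)"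
    using m r by (intro powr_mono2) auto
  also have "\<dots> = (r - 1) * s powr (1 / r) * real k powr (1 / 2)"
    using s r by (simp add: powr_mult powr_powr)
  also have "\<dots> \<le> (r - 1) * real k powr (1 / 2)"
    using powr_mono2[of "1 / r" s 1] s r by (simp add: mult_left_le_one_le)
  finally have "m powr (1 / r) + 1 \<le> r * real k powr (1 / 2)"
    using ge_one_powr_ge_zero[of "real k" "1 / 2"] k by (simp add: algebra_simps)
  then have "(m powr (1 / r) + 1) powr (r - 2) \<le> (r * real k powr (1 / 2)) powr (r - 2)"
    using r by (intro powr_mono2) auto
  also have "\<dots> = r powr (r - 2) * real k powr (r / 2 - 1)"
    using r by (simp add: powr_mult powr_powr field_simps)
  finally show ?thesis .
qed

text \<open>The induction step of the moment bound: adding one coordinate increases the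
  normalized bound \<open>k powr (r / 2)\<close> to \<open>(k + 1) powr (r / 2)\<close>, by the tangent line at \<open>k\<close>.\<close>

lemma moment_recursion_step:
  fixes r s m :: real and k :: nat
  assumes r: "r \<ge> 2" and s: "0 \<le> s" "s \<le> 1"
    and m: "0 \<le> m" "m \<le> (r - 1) powr r * s * real k powr (r / 2)"
  shows "m + r * (r - 1) / 2 * s * (m powr (1 / r) + 1) powr (r - 2)
           \<le> (r - 1) powr r * s * real (Suc k) powr (r / 2)"
proof (cases "k = 0")
  case True
  then have "m = 0" using m r by simp
  then show ?thesis
    using mult_right_mono[OF half_mult_pred_le_pred_powr[OF r] s(1)] True by simp
next
  case False
  define B where "B = (r - 1) powr r"
  have B: "B \<ge> 0" by (simp add: B_def)
  have "r * (r - 1) / 2 * r powr (r - 2) \<le> r * (r - 1) / 2 * (r - 1) powr (r - 1)"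
    using powr_minus_two_le_pred_powr_pred[OF r] r by (intro mult_left_mono) auto
  also have "\<dots> = r / 2 * B" using r by (simp add: B_def powr_diff field_simps)
  finally have coeff: "r * (r - 1) / 2 * r powr (r - 2) \<le> r / 2 * B" .
  have tangent: "real k powr (r / 2) + r / 2 * real k powr (r / 2 - 1) * (real (Suc k) - real k)
                   \<le> real (Suc k) powr (r / 2)"
    using False r by (intro powr_tangent_le) auto
  have "r * (r - 1) / 2 * s * (m powr (1 / r) + 1) powr (r - 2)
        \<le> r * (r - 1) / 2 * s * (r powr (r - 2) * real k powr (r / 2 - 1))"
    using root_moment_plus_one_powr_le[OF r s _ m] False s r by (intro mult_left_mono) auto
  also have "\<dots> = s * real k powr (r / 2 - 1) * (r * (r - 1) / 2 * r powr (r - 2))"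
    by (simp add: mult_ac)
  finally have "m + r * (r - 1) / 2 * s * (m powr (1 / r) + 1) powr (r - 2)
        \<le> B * s * real k powr (r / 2) + s * real k powr (r / 2 - 1) * (r * (r - 1) / 2 * r powr (r - 2))"
    using m(2) unfolding B_def by (rule add_mono[rotated])
  also have "\<dots> \<le> B * s * real k powr (r / 2) + s * real k powr (r / 2 - 1) * (r / 2 * B)"
    using coeff s by (intro add_left_mono mult_left_mono) auto
  also have "\<dots> = B * s * (real k powr (r / 2) + r / 2 * real k powr (r / 2 - 1) * (real (Suc k) - real k))"
    by (simp add: algebra_simps)
  also have "\<dots> \<le> B * s * real (Suc k) powr (r / 2)"
    using tangent s B by (intro mult_left_mono) auto
  finally show ?thesis by (simp add: B_def)
qed

section \<open>Expectations over finitely supported distributions\<close>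

lemma expectation_eq_sum_set_pmf:
  fixes f :: "'a \<Rightarrow> real"
  assumes "finite (set_pmf M)"
  shows "measure_pmf.expectation M f = (\<Sum>x\<in>set_pmf M. f x * pmf M x)"
  using assms by (intro integral_measure_pmf_real) auto

lemma expectation_pair_pmf_iterated:
  fixes F :: "'a \<times> 'b \<Rightarrow> real"
  assumes A: "finite (set_pmf A)" and B: "finite (set_pmf B)"
  shows "measure_pmf.expectation (pair_pmf A B) F
          = measure_pmf.expectation B (\<lambda>b. measure_pmf.expectation A (\<lambda>a. F (a, b)))"
proof -
  have "measure_pmf.expectation (pair_pmf A B) F
        = (\<Sum>a\<in>set_pmf A. \<Sum>b\<in>set_pmf B. F (a, b) * (pmf A a * pmf B b))"
    using A B by (simp add: expectation_eq_sum_set_pmf sum.cartesian_product)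
      (auto intro!: sum.cong simp: pmf_pair)
  also have "\<dots> = (\<Sum>b\<in>set_pmf B. (\<Sum>a\<in>set_pmf A. F (a, b) * pmf A a) * pmf B b)"
    by (subst sum.swap) (simp add: sum_distrib_right mult.assoc)
  also have "\<dots> = measure_pmf.expectation B (\<lambda>b. measure_pmf.expectation A (\<lambda>a. F (a, b)))"
    using A B by (simp add: expectation_eq_sum_set_pmf)
  finally show ?thesis .
qed

lemma expectation_mono_finite_pmf:
  fixes f g :: "'a \<Rightarrow> real"
  assumes "finite (set_pmf M)" "\<And>x. x \<in> set_pmf M \<Longrightarrow> f x \<le> g x"
  shows "measure_pmf.expectation M f \<le> measure_pmf.expectation M g"
  using assms by (intro integral_mono_AE) (auto simp: integrable_measure_pmf_finite AE_measure_pmf_iff)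

lemma expectation_nonneg_pmf:
  fixes f :: "'a \<Rightarrow> real"
  assumes "\<And>x. x \<in> set_pmf M \<Longrightarrow> 0 \<le> f x"
  shows "0 \<le> measure_pmf.expectation M f"
  using assms by (intro integral_nonneg_AE) (auto simp: AE_measure_pmf_iff)

text \<open>Jensen's inequality on \<open>[0, \<infinity>)\<close> (the library version needs an open interval),
  via the tangent line at the mean.\<close>

lemma powr_expectation_le:
  fixes Y :: "'a \<Rightarrow> real"
  assumes fin: "finite (set_pmf M)" and Y: "\<And>x. x \<in> set_pmf M \<Longrightarrow> 0 \<le> Y x" and p: "p \<ge> 1"
  shows "(measure_pmf.expectation M Y) powr p \<le> measure_pmf.expectation M (\<lambda>x. Y x powr p)"
proof -
  define c where "c = measure_pmf.expectation M Y"
  have "c \<ge> 0" unfolding c_def using Y by (rule expectation_nonneg_pmf)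
  show ?thesis
  proof (cases "c = 0")
    case True
    then show ?thesis using expectation_nonneg_pmf[of M "\<lambda>x. Y x powr p"] by (simp add: c_def)
  next
    case False
    then have "c > 0" using \<open>c \<ge> 0\<close> by simp
    have "c powr p = measure_pmf.expectation M (\<lambda>x. c powr p + p * c powr (p - 1) * (Y x - c))"
      using fin by (simp add: integrable_measure_pmf_finite c_def)
    also have "\<dots> \<le> measure_pmf.expectation M (\<lambda>x. Y x powr p)"
      using fin powr_tangent_le[OF \<open>c > 0\<close> Y p] by (rule expectation_mono_finite_pmf)
    finally show ?thesis by (simp add: c_def)
  qed
qed

lemma lyapunov_inequality_pmf:
  fixes X :: "'a \<Rightarrow> real"
  assumes fin: "finite (set_pmf M)" and X: "\<And>x. x \<in> set_pmf M \<Longrightarrow> 0 \<le> X x"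
    and s: "0 < s" "s \<le> r"
  shows "measure_pmf.expectation M (\<lambda>x. X x powr s)
           \<le> (measure_pmf.expectation M (\<lambda>x. X x powr r)) powr (s / r)"
proof -
  have "(measure_pmf.expectation M (\<lambda>x. X x powr s)) powr (r / s)
        \<le> measure_pmf.expectation M (\<lambda>x. (X x powr s) powr (r / s))"
    using s by (intro powr_expectation_le fin) auto
  also have "\<dots> = measure_pmf.expectation M (\<lambda>x. X x powr r)"
    using s by (simp add: powr_powr)
  finally have "((measure_pmf.expectation M (\<lambda>x. X x powr s)) powr (r / s)) powr (s / r)
        \<le> (measure_pmf.expectation M (\<lambda>x. X x powr r)) powr (s / r)"
    using s by (intro powr_mono2) auto
  then show ?thesis
    using s expectation_nonneg_pmf[of M "\<lambda>x. X x powr s"] by (simp add: powr_powr)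
qed

lemma plus_one_powr_le:
  fixes x t r :: real
  assumes x: "x \<ge> 0" and t: "t > 0" and r: "r \<ge> 1"
  shows "(x + 1) powr r \<le> ((t + 1) / t) powr (r - 1) * x powr r + (t + 1) powr (r - 1)"
proof (cases "x = 0")
  case True
  then show ?thesis using t r ge_one_powr_ge_zero[of "t + 1" "r - 1"] by simp
next
  case False
  define w where "w = 1 / (t + 1)"
  have w: "0 \<le> w" "w \<le> 1" "1 - w = t / (t + 1)" using t by (auto simp: w_def field_simps)
  have "(x + 1) powr r = ((1 - w) * (x * (t + 1) / t) + w * (t + 1)) powr r"
    using w t by (simp add: w_def)
  also have "\<dots> \<le> (1 - w) * (x * (t + 1) / t) powr r + w * (t + 1) powr r"
    using convex_onD[OF powr_convex[OF r] w(1,2), of "x * (t + 1) / t" "t + 1"] x t False by simp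
  also have "(1 - w) * (x * (t + 1) / t) powr r = ((t + 1) / t) powr (r - 1) * x powr r"
  proof -
    define K where "K = (t + 1) / t"
    have "K > 0" using t by (simp add: K_def)
    then have "(x * K) powr r = x powr r * K powr (r - 1) * K"
      using x by (simp add: powr_mult powr_diff)
    moreover have "x * (t + 1) / t = x * K" "1 - w = 1 / K" using w(3) by (simp_all add: K_def)
    ultimately show ?thesis using \<open>K > 0\<close> by (simp add: K_def[symmetric])
  qed
  also have "w * (t + 1) powr r = (t + 1) powr (r - 1)"
    using t by (simp add: w_def powr_diff)
  finally show ?thesis .
qed

lemma expectation_plus_one_powr_le:
  fixes X :: "'a \<Rightarrow> real"
  assumes fin: "finite (set_pmf M)" and X: "\<And>x. x \<in> set_pmf M \<Longrightarrow> 0 \<le> X x" and r: "r \<ge> 1"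
  shows "measure_pmf.expectation M (\<lambda>x. (X x + 1) powr r)
           \<le> ((measure_pmf.expectation M (\<lambda>x. X x powr r)) powr (1 / r) + 1) powr r"
proof -
  define m where "m = measure_pmf.expectation M (\<lambda>x. X x powr r)"
  define t where "t = m powr (1 / r)"
  have "m \<ge> 0" unfolding m_def by (rule expectation_nonneg_pmf) simp
  show ?thesis
  proof (cases "m = 0")
    case True
    have "(\<Sum>x\<in>set_pmf M. X x powr r * pmf M x) = 0"
      using True fin by (simp add: m_def expectation_eq_sum_set_pmf)
    then have "X x = 0" if "x \<in> set_pmf M" for x
      using that fin by (subst (asm) sum_nonneg_eq_0_iff) (auto simp: set_pmf_iff)
    then have "measure_pmf.expectation M (\<lambda>x. (X x + 1) powr r) = measure_pmf.expectation M (\<lambda>x. 1)"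
      by (intro integral_cong_AE) (auto simp: AE_measure_pmf_iff)
    then show ?thesis using True by (simp add: m_def)
  next
    case False
    then have "t > 0" using \<open>m \<ge> 0\<close> by (simp add: t_def)
    have t_powr: "t powr r = m" using \<open>m \<ge> 0\<close> r by (simp add: t_def powr_powr)
    have "measure_pmf.expectation M (\<lambda>x. (X x + 1) powr r)
          \<le> measure_pmf.expectation M (\<lambda>x. ((t + 1) / t) powr (r - 1) * X x powr r + (t + 1) powr (r - 1))"
      using fin plus_one_powr_le[OF X \<open>t > 0\<close> r] by (rule expectation_mono_finite_pmf)
    also have "\<dots> = ((t + 1) / t) powr (r - 1) * t powr r + (t + 1) powr (r - 1)"
      using fin by (simp add: integrable_measure_pmf_finite t_powr m_def)
    also have "((t + 1) / t) powr (r - 1) * t powr r = (t + 1) powr (r - 1) * t"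
      using \<open>t > 0\<close> by (simp add: powr_divide powr_diff)
    also have "(t + 1) powr (r - 1) * t + (t + 1) powr (r - 1) = (t + 1) powr (r - 1) * (t + 1)"
      by (simp add: algebra_simps)
    also have "\<dots> = (t + 1) powr r"
      using \<open>t > 0\<close> by (simp add: powr_diff)
    finally show ?thesis by (simp add: t_def m_def)
  qed
qed

lemma expectation_plus_one_powr_minus_two_le:
  fixes X :: "'a \<Rightarrow> real"
  assumes fin: "finite (set_pmf M)" and X: "\<And>x. x \<in> set_pmf M \<Longrightarrow> 0 \<le> X x" and r: "r \<ge> 2"
  shows "measure_pmf.expectation M (\<lambda>x. (X x + 1) powr (r - 2))
           \<le> ((measure_pmf.expectation M (\<lambda>x. X x powr r)) powr (1 / r) + 1) powr (r - 2)"
proof (cases "r = 2")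
  case True
  have "measure_pmf.expectation M (\<lambda>x. (X x + 1) powr (r - 2)) = measure_pmf.expectation M (\<lambda>x. 1)"
    using X True by (intro integral_cong_AE) (auto simp: AE_measure_pmf_iff add_nonneg_eq_0_iff)
  moreover have "0 < (measure_pmf.expectation M (\<lambda>x. X x powr r)) powr (1 / r) + 1"
    by (simp add: add_nonneg_pos)
  ultimately show ?thesis using True by simp
next
  case False
  have "measure_pmf.expectation M (\<lambda>x. (X x + 1) powr (r - 2))
        \<le> (measure_pmf.expectation M (\<lambda>x. (X x + 1) powr r)) powr ((r - 2) / r)"
    using False r X by (intro lyapunov_inequality_pmf[OF fin]) (auto intro: add_nonneg_nonneg)
  also have "\<dots> \<le> (((measure_pmf.expectation M (\<lambda>x. X x powr r)) powr (1 / r) + 1) powr r) powr ((r - 2) / r)"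
    using expectation_plus_one_powr_le[OF fin X] r X
    by (intro powr_mono2 expectation_nonneg_pmf) (auto intro: add_nonneg_nonneg)
  also have "\<dots> = ((measure_pmf.expectation M (\<lambda>x. X x powr r)) powr (1 / r) + 1) powr (r - 2)"
    using r by (simp add: powr_powr add_nonneg_nonneg)
  finally show ?thesis .
qed

definition mismatch_prob :: "'a pmf \<Rightarrow> real" where
  "mismatch_prob p = 1 - (\<Sum>a\<in>set_pmf p. (pmf p a)\<^sup>2)"

lemma mismatch_prob_nonneg:
  assumes "finite (set_pmf p)"
  shows "0 \<le> mismatch_prob p"
proof -
  have "(\<Sum>a\<in>set_pmf p. (pmf p a)\<^sup>2) \<le> (\<Sum>a\<in>set_pmf p. pmf p a)"
    by (intro sum_mono) (auto simp: power2_eq_square pmf_le_1 intro!: mult_left_le_one_le)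
  also have "\<dots> = 1" using assms by (intro sum_pmf_eq_1) auto
  finally show ?thesis by (simp add: mismatch_prob_def)
qed

lemma mismatch_prob_le_1: "mismatch_prob p \<le> 1"
  by (simp add: mismatch_prob_def sum_nonneg)

lemma sum_sum_weighted_sq_diff:
  fixes w \<phi> :: "'a \<Rightarrow> real"
  assumes w: "(\<Sum>x\<in>S. w x) = 1"
  shows "(\<Sum>a\<in>S. \<Sum>b\<in>S. w a * w b * (\<phi> a - \<phi> b)\<^sup>2)
           = 2 * (\<Sum>a\<in>S. w a * (\<phi> a - (\<Sum>x\<in>S. w x * \<phi> x))\<^sup>2)"
proof -
  define D where "D a = \<phi> a - (\<Sum>x\<in>S. w x * \<phi> x)" for a
  define V where "V = (\<Sum>a\<in>S. w a * (D a)\<^sup>2)"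
  have centered: "(\<Sum>a\<in>S. w a * D a) = 0"
    using w by (simp add: D_def right_diff_distrib sum_subtractf sum_distrib_right[symmetric])
  have expand: "w a * w b * (\<phi> a - \<phi> b)\<^sup>2
      = w b * (w a * (D a)\<^sup>2) + w a * (w b * (D b)\<^sup>2) - 2 * ((w a * D a) * (w b * D b))" for a b
    unfolding D_def by (simp add: power2_eq_square algebra_simps)
  have "(\<Sum>a\<in>S. \<Sum>b\<in>S. w a * w b * (\<phi> a - \<phi> b)\<^sup>2)
      = (\<Sum>a\<in>S. \<Sum>b\<in>S. w b * (w a * (D a)\<^sup>2)) + (\<Sum>a\<in>S. \<Sum>b\<in>S. w a * (w b * (D b)\<^sup>2))
        - 2 * (\<Sum>a\<in>S. \<Sum>b\<in>S. (w a * D a) * (w b * D b))"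
    unfolding expand by (simp add: sum.distrib sum_subtractf sum_distrib_left)
  also have "(\<Sum>a\<in>S. \<Sum>b\<in>S. w b * (w a * (D a)\<^sup>2)) = V"
    by (simp add: V_def sum_distrib_right[symmetric] w)
  also have "(\<Sum>a\<in>S. \<Sum>b\<in>S. w a * (w b * (D b)\<^sup>2)) = V"
    by (simp add: V_def sum_distrib_left[symmetric] sum_distrib_right[symmetric] w)
  also have "(\<Sum>a\<in>S. \<Sum>b\<in>S. (w a * D a) * (w b * D b)) = 0"
    by (simp add: sum_distrib_left[symmetric] sum_distrib_right[symmetric] centered)
  finally show ?thesis by (simp add: V_def D_def)
qed

lemma sum_sum_off_diagonal_weights:
  fixes w :: "'a \<Rightarrow> real"
  assumes S: "finite S" and w: "(\<Sum>x\<in>S. w x) = 1"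
  shows "(\<Sum>a\<in>S. \<Sum>b\<in>S. if a = b then 0 else w a * w b) = 1 - (\<Sum>a\<in>S. (w a)\<^sup>2)"
proof -
  have "(\<Sum>b\<in>S. if a = b then 0 else w a * w b) = w a - w a * w a" if "a \<in> S" for a
  proof -
    have "(\<Sum>b\<in>S. w a * w b) = (\<Sum>b\<in>S. if a = b then w a * w b else 0) + (\<Sum>b\<in>S. if a = b then 0 else w a * w b)"
      by (subst sum.distrib[symmetric]) (rule sum.cong; simp)
    then show ?thesis using that S w by (simp add: sum_distrib_left[symmetric])
  qed
  then have "(\<Sum>a\<in>S. \<Sum>b\<in>S. if a = b then 0 else w a * w b) = (\<Sum>a\<in>S. w a - w a * w a)"
    by (rule sum.cong[OF refl])
  then show ?thesis by (simp add: sum_subtractf w power2_eq_square)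
qed

text \<open>The variance of \<open>\<phi>\<close> is half the mean square difference of two independent copies,
  each of which is at most \<open>1\<close> and vanishes unless the copies differ.\<close>

lemma variance_le_half_mismatch_prob:
  fixes \<phi> :: "'a \<Rightarrow> real"
  assumes fin: "finite (set_pmf p)"
    and osc: "\<And>a b. a \<in> set_pmf p \<Longrightarrow> b \<in> set_pmf p \<Longrightarrow> \<bar>\<phi> a - \<phi> b\<bar> \<le> 1"
  shows "measure_pmf.expectation p (\<lambda>y. (\<phi> y - measure_pmf.expectation p \<phi>)\<^sup>2) \<le> mismatch_prob p / 2"
proof -
  let ?S = "set_pmf p"
  have w: "(\<Sum>x\<in>?S. pmf p x) = 1" using fin by (intro sum_pmf_eq_1) auto
  have "2 * measure_pmf.expectation p (\<lambda>y. (\<phi> y - measure_pmf.expectation p \<phi>)\<^sup>2)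
        = (\<Sum>a\<in>?S. \<Sum>b\<in>?S. pmf p a * pmf p b * (\<phi> a - \<phi> b)\<^sup>2)"
    using sum_sum_weighted_sq_diff[OF w, of \<phi>] fin
    by (simp add: expectation_eq_sum_set_pmf mult.commute)
  also have "\<dots> \<le> (\<Sum>a\<in>?S. \<Sum>b\<in>?S. if a = b then 0 else pmf p a * pmf p b)"
  proof (intro sum_mono)
    fix a b assume "a \<in> ?S" "b \<in> ?S"
    then have "(\<phi> a - \<phi> b)\<^sup>2 \<le> 1" using osc[of a b] by (simp add: abs_square_le_1)
    then show "pmf p a * pmf p b * (\<phi> a - \<phi> b)\<^sup>2 \<le> (if a = b then 0 else pmf p a * pmf p b)"
      by (simp add: mult_left_le)
  qed
  also have "\<dots> = mismatch_prob p"
    using sum_sum_off_diagonal_weights[OF fin w] by (simp add: mismatch_prob_def)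
  finally show ?thesis by simp
qed

section \<open>Functions of independent letters with bounded differences\<close>

definition bounded_differences :: "'i set \<Rightarrow> (('i \<Rightarrow> 'a) \<Rightarrow> real) \<Rightarrow> bool" where
  "bounded_differences I f \<longleftrightarrow> (\<forall>h j a. j \<in> I \<longrightarrow> \<bar>f (h(j := a)) - f h\<bar> \<le> 1)"

lemma finite_set_Pi_pmf:
  assumes "finite I" "finite (set_pmf p)"
  shows "finite (set_pmf (Pi_pmf I dflt (\<lambda>_. p)))"
  using assms by (subst set_Pi_pmf) (auto intro!: finite_PiE_dflt)

lemma abs_expectation_le:
  fixes g :: "'a \<Rightarrow> real"
  assumes fin: "finite (set_pmf M)" and g: "\<And>x. x \<in> set_pmf M \<Longrightarrow> \<bar>g x\<bar> \<le> c"
  shows "\<bar>measure_pmf.expectation M g\<bar> \<le> c"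
proof -
  have "\<bar>measure_pmf.expectation M g\<bar> \<le> measure_pmf.expectation M (\<lambda>x. \<bar>g x\<bar>)"
    using integral_norm_bound[of M g] by simp
  also have "\<dots> \<le> measure_pmf.expectation M (\<lambda>x. c)"
    using fin g by (rule expectation_mono_finite_pmf)
  finally show ?thesis by simp
qed

lemma expectation_Pi_pmf_insert:
  fixes F :: "('i \<Rightarrow> 'a) \<Rightarrow> real"
  assumes p: "finite (set_pmf p)" and I: "finite I" "i \<notin> I"
  shows "measure_pmf.expectation (Pi_pmf (insert i I) dflt (\<lambda>_. p)) F
           = measure_pmf.expectation (Pi_pmf I dflt (\<lambda>_. p))
               (\<lambda>h. measure_pmf.expectation p (\<lambda>y. F (h(i := y))))"
  using I by (simp add: Pi_pmf_insert case_prod_beta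
      expectation_pair_pmf_iterated[OF p finite_set_Pi_pmf[OF I(1) p]])

lemma bounded_differences_average:
  assumes p: "finite (set_pmf p)" and i: "i \<notin> I"
    and f: "bounded_differences (insert i I) f"
  shows "bounded_differences I (\<lambda>h. measure_pmf.expectation p (\<lambda>y. f (h(i := y))))"
  unfolding bounded_differences_def
proof (intro allI impI)
  fix h j a assume "j \<in> I"
  then have "j \<noteq> i" using i by auto
  have "measure_pmf.expectation p (\<lambda>y. f ((h(j := a))(i := y))) - measure_pmf.expectation p (\<lambda>y. f (h(i := y)))
        = measure_pmf.expectation p (\<lambda>y. f ((h(i := y))(j := a)) - f (h(i := y)))"
    using p \<open>j \<noteq> i\<close> by (simp add: integrable_measure_pmf_finite fun_upd_twist[of j i])
  also have "\<bar>\<dots>\<bar> \<le> 1"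
    using p f \<open>j \<in> I\<close> by (intro abs_expectation_le) (auto simp: bounded_differences_def)
  finally show "\<bar>measure_pmf.expectation p (\<lambda>y. f ((h(j := a))(i := y)))
                 - measure_pmf.expectation p (\<lambda>y. f (h(i := y)))\<bar> \<le> 1" .
qed

text \<open>Resampling one coordinate: in the expansion of \<open>abs_powr_add_le\<close> the first-order
  term has mean zero and the second-order term is controlled by the variance bound.\<close>

lemma expectation_abs_add_centered_powr_le:
  fixes \<phi> :: "'a \<Rightarrow> real" and a r :: real
  assumes fin: "finite (set_pmf p)" and r: "r \<ge> 2"
    and osc: "\<And>x y. x \<in> set_pmf p \<Longrightarrow> y \<in> set_pmf p \<Longrightarrow> \<bar>\<phi> x - \<phi> y\<bar> \<le> 1"
  shows "measure_pmf.expectation p (\<lambda>y. \<bar>a + (\<phi> y - measure_pmf.expectation p \<phi>)\<bar> powr r)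
    \<le> \<bar>a\<bar> powr r + r * (r - 1) / 2 * (\<bar>a\<bar> + 1) powr (r - 2) * (mismatch_prob p / 2)"
proof -
  define d where "d y = \<phi> y - measure_pmf.expectation p \<phi>" for y
  define K where "K = r * (r - 1) / 2 * (\<bar>a\<bar> + 1) powr (r - 2)"
  have d: "\<bar>d y\<bar> \<le> 1" if "y \<in> set_pmf p" for y
  proof -
    have "d y = measure_pmf.expectation p (\<lambda>b. \<phi> y - \<phi> b)"
      using fin by (simp add: d_def integrable_measure_pmf_finite)
    also have "\<bar>\<dots>\<bar> \<le> 1" using fin osc that by (intro abs_expectation_le) auto
    finally show ?thesis .
  qed
  have "measure_pmf.expectation p (\<lambda>y. \<bar>a + d y\<bar> powr r)
        \<le> measure_pmf.expectation p (\<lambda>y. \<bar>a\<bar> powr r + r * signed_powr r a * d y + K * (d y)\<^sup>2)"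
    using abs_powr_add_le[OF r d] by (intro expectation_mono_finite_pmf[OF fin]) (simp add: K_def)
  also have "\<dots> = \<bar>a\<bar> powr r + r * signed_powr r a * measure_pmf.expectation p d
                   + K * measure_pmf.expectation p (\<lambda>y. (d y)\<^sup>2)"
    using fin by (simp add: integrable_measure_pmf_finite)
  also have "measure_pmf.expectation p d = 0"
    using fin by (simp add: d_def[abs_def] integrable_measure_pmf_finite)
  also have "K * measure_pmf.expectation p (\<lambda>y. (d y)\<^sup>2) \<le> K * (mismatch_prob p / 2)"
    using r variance_le_half_mismatch_prob[OF fin osc] by (intro mult_left_mono) (auto simp: d_def K_def)
  finally show ?thesis by (simp add: d_def K_def)
qed

lemma central_moment_Pi_pmf_insert_le:
  fixes f :: "('i \<Rightarrow> 'a) \<Rightarrow> real" and dflt :: 'a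
  assumes p: "finite (set_pmf p)" and I: "finite I" "i \<notin> I" and r: "r \<ge> 2"
    and f: "bounded_differences (insert i I) f"
  defines "\<mu> \<equiv> Pi_pmf I dflt (\<lambda>_. p)"
  defines "G \<equiv> \<lambda>h. measure_pmf.expectation p (\<lambda>y. f (h(i := y)))"
  defines "m \<equiv> measure_pmf.expectation \<mu> (\<lambda>h. \<bar>G h - measure_pmf.expectation \<mu> G\<bar> powr r)"
  shows "measure_pmf.expectation (Pi_pmf (insert i I) dflt (\<lambda>_. p))
           (\<lambda>h. \<bar>f h - measure_pmf.expectation (Pi_pmf (insert i I) dflt (\<lambda>_. p)) f\<bar> powr r)
         \<le> m + r * (r - 1) / 2 * (mismatch_prob p / 2) * (m powr (1 / r) + 1) powr (r - 2)"
proof -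
  define c where "c = measure_pmf.expectation \<mu> G"
  define K where "K = r * (r - 1) / 2 * (mismatch_prob p / 2)"
  have \<mu>: "finite (set_pmf \<mu>)" unfolding \<mu>_def using I(1) p by (rule finite_set_Pi_pmf)
  note insert_eq = expectation_Pi_pmf_insert[OF p I, folded \<mu>_def]
  have resample: "measure_pmf.expectation p (\<lambda>y. \<bar>f (h(i := y)) - c\<bar> powr r)
                    \<le> \<bar>G h - c\<bar> powr r + K * (\<bar>G h - c\<bar> + 1) powr (r - 2)" for h
  proof -
    have "\<bar>f (h(i := x)) - f (h(i := y))\<bar> \<le> 1" for x y
      using f unfolding bounded_differences_def by (metis fun_upd_upd insertI1)
    then show ?thesis
      using expectation_abs_add_centered_powr_le[OF p r, of "\<lambda>y. f (h(i := y))" "G h - c"]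
      by (simp add: G_def K_def mult_ac)
  qed
  have "measure_pmf.expectation (Pi_pmf (insert i I) dflt (\<lambda>_. p))
          (\<lambda>h. \<bar>f h - measure_pmf.expectation (Pi_pmf (insert i I) dflt (\<lambda>_. p)) f\<bar> powr r)
        = measure_pmf.expectation \<mu> (\<lambda>h. measure_pmf.expectation p (\<lambda>y. \<bar>f (h(i := y)) - c\<bar> powr r))"
    by (simp add: insert_eq c_def G_def \<mu>_def)
  also have "\<dots> \<le> measure_pmf.expectation \<mu> (\<lambda>h. \<bar>G h - c\<bar> powr r + K * (\<bar>G h - c\<bar> + 1) powr (r - 2))"
    using \<mu> resample by (rule expectation_mono_finite_pmf)
  also have "\<dots> = m + K * measure_pmf.expectation \<mu> (\<lambda>h. (\<bar>G h - c\<bar> + 1) powr (r - 2))"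
    using \<mu> by (simp add: m_def c_def integrable_measure_pmf_finite)
  also have "\<dots> \<le> m + K * (m powr (1 / r) + 1) powr (r - 2)"
    using expectation_plus_one_powr_minus_two_le[OF \<mu>, of "\<lambda>h. \<bar>G h - c\<bar>" r] r mismatch_prob_nonneg[OF p]
    by (intro add_left_mono mult_left_mono) (auto simp: K_def m_def c_def)
  finally show ?thesis by (simp add: K_def)
qed

theorem central_moment_Pi_pmf_le:
  fixes p :: "'a pmf" and I :: "'i set" and f :: "('i \<Rightarrow> 'a) \<Rightarrow> real" and r :: real
  assumes p: "finite (set_pmf p)" and I: "finite I" and r: "r \<ge> 2"
    and f: "bounded_differences I f"
  shows "measure_pmf.expectation (Pi_pmf I dflt (\<lambda>_. p))
           (\<lambda>h. \<bar>f h - measure_pmf.expectation (Pi_pmf I dflt (\<lambda>_. p)) f\<bar> powr r)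
         \<le> (r - 1) powr r * (mismatch_prob p / 2) * real (card I) powr (r / 2)"
  using I f
proof (induction I arbitrary: f rule: finite_induct)
  case empty
  then show ?case by simp
next
  case (insert i I)
  define G where "G = (\<lambda>h. measure_pmf.expectation p (\<lambda>y. f (h(i := y))))"
  define m where "m = measure_pmf.expectation (Pi_pmf I dflt (\<lambda>_. p))
                        (\<lambda>h. \<bar>G h - measure_pmf.expectation (Pi_pmf I dflt (\<lambda>_. p)) G\<bar> powr r)"
  have IH: "m \<le> (r - 1) powr r * (mismatch_prob p / 2) * real (card I) powr (r / 2)"
    unfolding m_def G_def
    using insert.IH bounded_differences_average[OF p insert.hyps(2) insert.prems] .
  have "0 \<le> m" unfolding m_def by (rule expectation_nonneg_pmf) simp
  have v: "0 \<le> mismatch_prob p / 2" "mismatch_prob p / 2 \<le> 1"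
    using mismatch_prob_nonneg[OF p] mismatch_prob_le_1[of p] by auto
  have "measure_pmf.expectation (Pi_pmf (insert i I) dflt (\<lambda>_. p))
           (\<lambda>h. \<bar>f h - measure_pmf.expectation (Pi_pmf (insert i I) dflt (\<lambda>_. p)) f\<bar> powr r)
         \<le> m + r * (r - 1) / 2 * (mismatch_prob p / 2) * (m powr (1 / r) + 1) powr (r - 2)"
    unfolding m_def G_def by (rule central_moment_Pi_pmf_insert_le[OF p insert.hyps r insert.prems])
  also have "\<dots> \<le> (r - 1) powr r * (mismatch_prob p / 2) * real (Suc (card I)) powr (r / 2)"
    by (rule moment_recursion_step[OF r v \<open>0 \<le> m\<close> IH])
  finally show ?case using insert.hyps by simp
qed

corollary central_moment_Pi_pmf_le_of_le_2:
  fixes p :: "'a pmf" and I :: "'i set" and f :: "('i \<Rightarrow> 'a) \<Rightarrow> real" and r :: real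
  assumes p: "finite (set_pmf p)" and I: "finite I" and r: "0 < r" "r \<le> 2"
    and f: "bounded_differences I f"
  shows "measure_pmf.expectation (Pi_pmf I dflt (\<lambda>_. p))
           (\<lambda>h. \<bar>f h - measure_pmf.expectation (Pi_pmf I dflt (\<lambda>_. p)) f\<bar> powr r)
         \<le> (mismatch_prob p / 2 * real (card I)) powr (r / 2)"
proof -
  let ?\<mu> = "Pi_pmf I dflt (\<lambda>_. p)"
  let ?X = "\<lambda>h. \<bar>f h - measure_pmf.expectation ?\<mu> f\<bar>"
  have "measure_pmf.expectation ?\<mu> (\<lambda>h. ?X h powr r) \<le> (measure_pmf.expectation ?\<mu> (\<lambda>h. ?X h powr 2)) powr (r / 2)"
    using r by (intro lyapunov_inequality_pmf finite_set_Pi_pmf I p) auto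
  also have "\<dots> \<le> (mismatch_prob p / 2 * real (card I)) powr (r / 2)"
    using central_moment_Pi_pmf_le[OF p I _ f, of 2 dflt] r
    by (intro powr_mono2 expectation_nonneg_pmf) auto
  finally show ?thesis .
qed

section \<open>Longest common subsequences\<close>

definition common_subseq_lengths :: "nat \<Rightarrow> (nat \<Rightarrow> 'a) \<Rightarrow> (nat \<Rightarrow> 'a) \<Rightarrow> nat set" where
  "common_subseq_lengths n x y = {k. \<exists>i j :: nat \<Rightarrow> nat.
      (\<forall>s\<in>{1..k}. 1 \<le> i s \<and> i s \<le> n \<and> 1 \<le> j s \<and> j s \<le> n \<and> x (i s) = y (j s)) \<and>
      (\<forall>s\<in>{1..<k}. i s < i (Suc s) \<and> j s < j (Suc s))}"

lemma LC_eq_Max: "LC n x y = Max (common_subseq_lengths n x y)"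
  by (simp add: LC_def common_subseq_lengths_def)

lemma strict_mono_on_atLeastAtMostI:
  fixes i :: "nat \<Rightarrow> nat"
  assumes "\<forall>s\<in>{1..<k}. i s < i (Suc s)"
  shows "strict_mono_on {1..k} i"
proof (rule strict_mono_onI)
  fix s s' :: nat assume s: "s \<in> {1..k}" "s' \<in> {1..k}" "s < s'"
  then have "Suc s \<le> s'" by simp
  then show "i s < i s'"
  proof (induction s' rule: dec_induct)
    case base
    then show ?case using assms s by auto
  next
    case (step n)
    then have "n \<in> {1..<k}" using s by auto
    then have "i n < i (Suc n)" using assms by blast
    then show ?case using step.IH by simp
  qed
qed

lemma common_subseq_lengths_le:
  assumes "k \<in> common_subseq_lengths n x y"
  shows "k \<le> n"
proof -
  obtain i j :: "nat \<Rightarrow> nat" where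
    range: "\<forall>s\<in>{1..k}. 1 \<le> i s \<and> i s \<le> n \<and> 1 \<le> j s \<and> j s \<le> n \<and> x (i s) = y (j s)" and
    chain: "\<forall>s\<in>{1..<k}. i s < i (Suc s) \<and> j s < j (Suc s)"
    using assms unfolding common_subseq_lengths_def by blast
  have "inj_on i {1..k}"
    using chain by (intro strict_mono_on_imp_inj_on strict_mono_on_atLeastAtMostI) auto
  then have "card {1..k} \<le> card {1..n}"
    using range by (intro card_inj_on_le) auto
  then show ?thesis by simp
qed

lemma finite_common_subseq_lengths: "finite (common_subseq_lengths n x y)"
  by (rule finite_subset[of _ "{..n}"]) (auto dest: common_subseq_lengths_le)

lemma LC_ge: "k \<in> common_subseq_lengths n x y \<Longrightarrow> k \<le> LC n x y"
  unfolding LC_eq_Max using finite_common_subseq_lengths by (rule Max_ge)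

lemma LC_mem_common_subseq_lengths: "LC n x y \<in> common_subseq_lengths n x y"
proof -
  have "0 \<in> common_subseq_lengths n x y" by (auto simp: common_subseq_lengths_def)
  then show ?thesis unfolding LC_eq_Max by (intro Max_in finite_common_subseq_lengths) blast
qed

lemma common_subseq_lengths_commute_subset:
  "common_subseq_lengths n x y \<subseteq> common_subseq_lengths n y x"
proof
  fix k assume "k \<in> common_subseq_lengths n x y"
  then obtain i j :: "nat \<Rightarrow> nat" where
    "\<forall>s\<in>{1..k}. 1 \<le> i s \<and> i s \<le> n \<and> 1 \<le> j s \<and> j s \<le> n \<and> x (i s) = y (j s)"
    "\<forall>s\<in>{1..<k}. i s < i (Suc s) \<and> j s < j (Suc s)"
    unfolding common_subseq_lengths_def by blast
  then show "k \<in> common_subseq_lengths n y x"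
    unfolding common_subseq_lengths_def mem_Collect_eq by (intro exI[of _ j] exI[of _ i]) auto
qed

lemma common_subseq_lengths_commute: "common_subseq_lengths n x y = common_subseq_lengths n y x"
  by (intro equalityI common_subseq_lengths_commute_subset)

lemma LC_commute: "LC n x y = LC n y x"
  by (simp add: LC_eq_Max common_subseq_lengths_commute)

text \<open>Changing one letter destroys at most one matched pair: dropping the pair that uses the
  changed position (or the last pair, if there is none) leaves a common subsequence.\<close>

lemma common_subseq_lengths_fun_upd:
  assumes k: "k \<in> common_subseq_lengths n x y" "k \<ge> 1"
  shows "k - 1 \<in> common_subseq_lengths n (x(t := a)) y"
proof -
  obtain i j :: "nat \<Rightarrow> nat" where
    range: "\<forall>s\<in>{1..k}. 1 \<le> i s \<and> i s \<le> n \<and> 1 \<le> j s \<and> j s \<le> n \<and> x (i s) = y (j s)" and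
    chain: "\<forall>s\<in>{1..<k}. i s < i (Suc s) \<and> j s < j (Suc s)"
    using k unfolding common_subseq_lengths_def by blast
  have "\<forall>s\<in>{1..<k}. i s < i (Suc s)" "\<forall>s\<in>{1..<k}. j s < j (Suc s)"
    using chain by auto
  note mono_i = strict_mono_on_atLeastAtMostI[OF this(1)]
    and mono_j = strict_mono_on_atLeastAtMostI[OF this(2)]
  obtain s0 where s0: "s0 \<in> {1..k}" and hits: "\<forall>s\<in>{1..k}. i s = t \<longrightarrow> s = s0"
  proof (cases "\<exists>s\<in>{1..k}. i s = t")
    case True
    then obtain s0 where "s0 \<in> {1..k}" "i s0 = t" by blast
    then show ?thesis
      using strict_mono_on_imp_inj_on[OF mono_i] by (intro that[of s0]) (auto dest: inj_onD)
  next
    case False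
    then show ?thesis using that k(2) by auto
  qed
  define g where "g s = (if s < s0 then s else Suc s)" for s
  have g: "g s \<in> {1..k}" "i (g s) \<noteq> t" if "s \<in> {1..k - 1}" for s
    using that s0 hits by (auto simp: g_def)
  have g_less: "g s < g (Suc s)" for s by (simp add: g_def)
  show ?thesis unfolding common_subseq_lengths_def
  proof (rule CollectI, rule exI[of _ "i \<circ> g"], rule exI[of _ "j \<circ> g"], rule conjI[OF ballI ballI])
    fix s assume "s \<in> {1..k - 1}"
    then show "1 \<le> (i \<circ> g) s \<and> (i \<circ> g) s \<le> n \<and> 1 \<le> (j \<circ> g) s \<and> (j \<circ> g) s \<le> n \<and>
          (x(t := a)) ((i \<circ> g) s) = y ((j \<circ> g) s)"
      using range g by auto
  next
    fix s assume "s \<in> {1..<k - 1}"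
    then have "g s \<in> {1..k}" "g (Suc s) \<in> {1..k}" using g(1)[of s] g(1)[of "Suc s"] by auto
    then show "(i \<circ> g) s < (i \<circ> g) (Suc s) \<and> (j \<circ> g) s < (j \<circ> g) (Suc s)"
      using mono_i mono_j g_less by (auto dest: strict_mono_onD)
  qed
qed

lemma LC_le_LC_fun_upd_Suc: "LC n x y \<le> Suc (LC n (x(t := a)) y)"
proof (cases "LC n x y = 0")
  case False
  then have "LC n x y - 1 \<in> common_subseq_lengths n (x(t := a)) y"
    by (intro common_subseq_lengths_fun_upd[OF LC_mem_common_subseq_lengths]) simp
  then have "LC n x y - 1 \<le> LC n (x(t := a)) y" by (rule LC_ge)
  then show ?thesis by simp
qed simp

lemma LC_fun_upd_left_diff_le: "\<bar>real (LC n (x(t := a)) y) - real (LC n x y)\<bar> \<le> 1"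
  using LC_le_LC_fun_upd_Suc[of n x y t a] LC_le_LC_fun_upd_Suc[of n "x(t := a)" y t "x t"]
  by simp

lemma LC_fun_upd_right_diff_le: "\<bar>real (LC n x (y(t := a))) - real (LC n x y)\<bar> \<le> 1"
  using LC_fun_upd_left_diff_le[of n y t a x] by (simp add: LC_commute[of n x])

section \<open>The pair of words as one family of independent letters\<close>

lemma pair_Pi_pmf_eq_map_Pi_pmf_Plus:
  fixes A :: "'i set" and B :: "'j set"
  assumes A: "finite A" and B: "finite B"
  shows "pair_pmf (Pi_pmf A dflt (\<lambda>_. p)) (Pi_pmf B dflt (\<lambda>_. p))
       = map_pmf (\<lambda>h. (h \<circ> Inl, h \<circ> Inr)) (Pi_pmf (A <+> B) dflt (\<lambda>_. p))"
proof -
  define QA where "QA = Pi_pmf (Inl ` A :: ('i + 'j) set) dflt (\<lambda>_. p)"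
  define QB where "QB = Pi_pmf (Inr ` B :: ('i + 'j) set) dflt (\<lambda>_. p)"
  have "Pi_pmf A dflt (\<lambda>_. p) = map_pmf (\<lambda>g. g \<circ> Inl) QA"
    unfolding QA_def using A by (intro Pi_pmf_bij_betw) (auto simp: bij_betw_def)
  moreover have "Pi_pmf B dflt (\<lambda>_. p) = map_pmf (\<lambda>g. g \<circ> Inr) QB"
    unfolding QB_def using B by (intro Pi_pmf_bij_betw) (auto simp: bij_betw_def)
  ultimately have "pair_pmf (Pi_pmf A dflt (\<lambda>_. p)) (Pi_pmf B dflt (\<lambda>_. p))
        = map_pmf (\<lambda>(f, g). (f \<circ> Inl, g \<circ> Inr)) (pair_pmf QA QB)"
    by (simp add: map_pair)
  also have "\<dots> = map_pmf (\<lambda>(f, g). let h = (\<lambda>x. if x \<in> Inl ` A then f x else g x) in (h \<circ> Inl, h \<circ> Inr))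
                    (pair_pmf QA QB)"
  proof (rule map_pmf_cong[OF refl])
    fix z assume "z \<in> set_pmf (pair_pmf QA QB)"
    then obtain f g where z: "z = (f, g)" "f \<in> set_pmf QA" "g \<in> set_pmf QB" by auto
    have "f (Inl x) = dflt" if "x \<notin> A" for x
      using set_Pi_pmf_subset[of "Inl ` A" dflt "\<lambda>_. p"] z(2) A that by (auto simp: QA_def)
    moreover have "g (Inl x) = dflt" for x
      using set_Pi_pmf_subset[of "Inr ` B" dflt "\<lambda>_. p"] z(3) B by (auto simp: QB_def)
    ultimately show "(case z of (f, g) \<Rightarrow> (f \<circ> Inl, g \<circ> Inr))
        = (case z of (f, g) \<Rightarrow> let h = (\<lambda>x. if x \<in> Inl ` A then f x else g x) in (h \<circ> Inl, h \<circ> Inr))"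
      by (auto simp: z fun_eq_iff)
  qed
  also have "\<dots> = map_pmf (\<lambda>h. (h \<circ> Inl, h \<circ> Inr)) (Pi_pmf (A <+> B) dflt (\<lambda>_. p))"
    unfolding QA_def QB_def Plus_def using A B
    by (subst Pi_pmf_union) (auto simp: map_pmf_comp Let_def case_prod_unfold)
  finally show ?thesis .
qed

lemma bounded_differences_LC:
  "bounded_differences I (\<lambda>h. real (LC n (h \<circ> Inl) (h \<circ> Inr)))"
  unfolding bounded_differences_def
proof (intro allI impI)
  fix h :: "nat + nat \<Rightarrow> 'a" and j a
  show "\<bar>real (LC n (h(j := a) \<circ> Inl) (h(j := a) \<circ> Inr)) - real (LC n (h \<circ> Inl) (h \<circ> Inr))\<bar> \<le> 1"
  proof (cases j)
    case (Inl t)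
    then have "h(j := a) \<circ> Inl = (h \<circ> Inl)(t := a)" "h(j := a) \<circ> Inr = h \<circ> Inr"
      by (auto simp: fun_eq_iff)
    then show ?thesis using LC_fun_upd_left_diff_le by simp
  next
    case (Inr t)
    then have "h(j := a) \<circ> Inl = h \<circ> Inl" "h(j := a) \<circ> Inr = (h \<circ> Inr)(t := a)"
      by (auto simp: fun_eq_iff)
    then show ?thesis using LC_fun_upd_right_diff_le by simp
  qed
qed

theorem mainTheorem4:
  fixes p :: "'a pmf" and n :: nat and r :: real
  assumes "finite (set_pmf p)"
  defines "M \<equiv> word_pair_pmf n p"
  defines "L \<equiv> (\<lambda>xy. real (LC n (fst xy) (snd xy)))"
  defines "q \<equiv> 1 - (\<Sum>a\<in>set_pmf p. (pmf p a)^2)"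
  shows "(2 \<le> r \<longrightarrow>
            measure_pmf.expectation M (\<lambda>xy. \<bar>L xy - measure_pmf.expectation M L\<bar> powr r)
              \<le> (r - 1) powr r / 2 * q * (2 * real n) powr (r / 2))
       \<and> (0 < r \<and> r \<le> 2 \<longrightarrow>
            measure_pmf.expectation M (\<lambda>xy. \<bar>L xy - measure_pmf.expectation M L\<bar> powr r)
              \<le> (q * real n) powr (r / 2))"
proof -
  define I where "I = {1..n} <+> {1..n}"
  define F where "F = (\<lambda>h :: nat + nat \<Rightarrow> 'a. real (LC n (h \<circ> Inl) (h \<circ> Inr)))"
  have I: "finite I" "card I = 2 * n" by (simp_all add: I_def card_Plus)
  have q: "q = mismatch_prob p" by (simp add: q_def mismatch_prob_def)
  have "measure_pmf.expectation M (\<lambda>xy. \<bar>L xy - measure_pmf.expectation M L\<bar> powr r)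
        = measure_pmf.expectation (Pi_pmf I undefined (\<lambda>_. p))
            (\<lambda>h. \<bar>F h - measure_pmf.expectation (Pi_pmf I undefined (\<lambda>_. p)) F\<bar> powr r)"
    by (simp add: M_def L_def F_def I_def word_pair_pmf_def pair_Pi_pmf_eq_map_Pi_pmf_Plus)
  then show ?thesis
    using central_moment_Pi_pmf_le[OF assms(1) I(1) _ bounded_differences_LC, where r=r and dflt=undefined]
      central_moment_Pi_pmf_le_of_le_2[OF assms(1) I(1) _ _ bounded_differences_LC, where r=r and dflt=undefined]
    by (simp add: F_def I(2) q mult_ac)
qed

end
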